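(* Fix $k\in\{1,\dots,K\}$ and fix the transmit powers $\mathbf{p}_{-k}=(p_j)_{j\neq k}$ of all other users (so that the quantity $D_k>0$ below is fixed). Then the utility function $$u_k(p_k,\mathbf{p}_{-k}) \;=\; \ell_k\,\mathtt{w}\,\log_2\!\bigl(1+\theta_k\gamma_k\bigr)\,\frac{\bigl(1-e^{-\gamma_k}\bigr)^M}{p_k+p_c},\qquad \gamma_k=\frac{p_k|h_k|^2}{D_k},$$ is quasiconcave in $p_k$ on the strategy set $[0,P_{\max}]$, i.e. for all $x_1\neq x_2$ in $[0,P_{\max}]$ and all $\lambda\in(0,1)$, $$u_k(\lambda x_1+(1-\lambda)x_2,\mathbf{p}_{-k})\ \ge\ \min\{u_k(x_1,\mathbf{p}_{-k}),\,u_k(x_2,\mathbf{p}_{-k})\}.$$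
   Context: Uplink DS-CDMA with $K$ users. User $k$ transmits with power $p_k\ge 0$ over a complex channel gain $h_k\neq 0$. $\mathbf{s}_j\in\mathbb{R}^N$ is the unit-norm spreading code of user $j$, $\mathbf{d}_k\in\mathbb{R}^N$ is the linear receive filter for user $k$ (e.g. the matched filter $\mathbf{d}_k=\mathbf{s}_k$, or the $k$-th column of the decorrelator $\mathbf{S}(\mathbf{S}^T\mathbf{S})^{-1}$), normalized so that $\mathbf{d}_k^T\mathbf{s}_k=1$, and $\sigma_k^2>0$ is the noise variance. The SINR is $$\gamma_k=\frac{p_k|h_k|^2}{D_k},\qquad D_k=\sum_{j\neq k}p_j|h_j|^2(\mathbf{d}_k^T\mathbf{s}_j)^2+\sigma_k^2\,\mathbf{d}_k^T\mathbf{d}_k .$$ Constants: bandwidth $\mathtt{w}>0$; $M\ge 1$ is the packet length in bits and $L\le M$ the number of information bits, $\ell_k=L/M$; circuit power $p_c>0$; maximal transmit power $P_{\max}>0$; gap $\theta_k=-1.5/\ln(5\,\mathrm{BER}_k)\in(0,1)$ for a target bit error rate $\mathrm{BER}_k\in(0,1/5)$. The factor $(1-e^{-\gamma_k})^M$ is the efficiency function (probability of error-free packet reception). *)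

theory Defs
  imports "HOL-Analysis.Analysis"
begin

text \<open>Users are indexed by 0,...,K-1. Spreading codes and receive filters are vectors
  in R^N, with N represented by the finite index type 'n.\<close>

definition interf_noise ::
  "nat \<Rightarrow> (nat \<Rightarrow> real) \<Rightarrow> (nat \<Rightarrow> complex) \<Rightarrow> (nat \<Rightarrow> real ^ 'n) \<Rightarrow> (nat \<Rightarrow> real ^ 'n)
   \<Rightarrow> (nat \<Rightarrow> real) \<Rightarrow> nat \<Rightarrow> real" where
  "interf_noise K p h s d \<sigma>2 k =
     (\<Sum>j\<in>{..<K} - {k}. p j * (cmod (h j))\<^sup>2 * (d k \<bullet> s j)\<^sup>2) + \<sigma>2 k * (d k \<bullet> d k)"

definition sinr ::
  "nat \<Rightarrow> (nat \<Rightarrow> real) \<Rightarrow> (nat \<Rightarrow> complex) \<Rightarrow> (nat \<Rightarrow> real ^ 'n) \<Rightarrow> (nat \<Rightarrow> real ^ 'n)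
   \<Rightarrow> (nat \<Rightarrow> real) \<Rightarrow> nat \<Rightarrow> real" where
  "sinr K p h s d \<sigma>2 k = p k * (cmod (h k))\<^sup>2 / interf_noise K p h s d \<sigma>2 k"

definition gap :: "real \<Rightarrow> real" where
  "gap ber = - 1.5 / ln (5 * ber)"

definition utility ::
  "nat \<Rightarrow> (nat \<Rightarrow> real) \<Rightarrow> (nat \<Rightarrow> complex) \<Rightarrow> (nat \<Rightarrow> real ^ 'n) \<Rightarrow> (nat \<Rightarrow> real ^ 'n)
   \<Rightarrow> (nat \<Rightarrow> real) \<Rightarrow> real \<Rightarrow> nat \<Rightarrow> nat \<Rightarrow> real \<Rightarrow> real \<Rightarrow> nat \<Rightarrow> real" where
  "utility K p h s d \<sigma>2 w M L pc ber k =
     (let \<gamma> = sinr K p h s d \<sigma>2 k in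
      (real L / real M) * w * log 2 (1 + gap ber * \<gamma>) * (1 - exp (- \<gamma>)) ^ M / (p k + pc))"

end

theory Submission
  imports Defs
begin

(* With the other users' powers fixed, the interference-plus-noise
   term D = interf_noise is a positive constant, so the SINR of user k is a * x
   for a = |h_k|^2 / D > 0 and the utility is a nonnegative constant times
     E(x) = ln (1 + c x) (1 - e^(-a x))^M / (x + pc),   c = gap ber * a > 0.
   On x > 0 we pass to logarithmic coordinates x = e^z and show that
     G(z) = - ln E(e^z) = - ln ln (1 + c e^z) + M (- ln (1 - e^(-a e^z))) + ln (e^z + pc)
   is convex, each summand being convex because its derivative is monotone
   (two elementary monotonicity facts about u / (e^u - 1) and (w - 1) / (w ln w)).
   A convex function lies below the maximum of its endpoint values, so E lies
   above the minimum of its endpoint values on every interval of (0, oo); the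
   endpoint 0 is harmless since E 0 = 0 <= E.  This is quasiconcavity of E on
   [0, oo), and multiplying by the constant factor gives the theorem. *)

text \<open>\<open>u / (e^u - 1)\<close> is antitone on \<open>(0, \<infinity>)\<close>: by convexity of \<open>exp\<close>, the chord
  slope \<open>(e^u - 1) / u\<close> from the origin increases.\<close>

lemma ratio_over_exp_minus_one_antimono:
  fixes u1 u2 :: real
  assumes "0 < u1" "u1 \<le> u2"
  shows "u2 / (exp u2 - 1) \<le> u1 / (exp u1 - 1)"
proof -
  define t where "t = u1 / u2"
  have t: "0 \<le> t" "t \<le> 1" using assms by (auto simp: t_def)
  have "exp ((1 - t) *\<^sub>R 0 + t *\<^sub>R u2) \<le> (1 - t) * exp 0 + t * exp u2"
    by (rule convex_onD[OF exp_convex]) (use t in auto)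
  moreover have "(1 - t) *\<^sub>R 0 + t *\<^sub>R u2 = u1" using assms by (simp add: t_def)
  ultimately have chord: "exp u1 - 1 \<le> t * (exp u2 - 1)" by (simp add: algebra_simps)
  have "(exp u1 - 1) * u2 \<le> u1 * (exp u2 - 1)"
    using chord assms by (simp add: t_def field_simps)
  moreover have "exp u1 - 1 > 0" "exp u2 - 1 > 0" using assms by simp_all
  ultimately show ?thesis using assms by (simp add: field_simps)
qed

text \<open>\<open>(w - 1) / (w ln w)\<close> is antitone on \<open>(1, \<infinity>)\<close>: the reciprocal \<open>w ln w / (w - 1)\<close>
  has derivative \<open>(w - 1 - ln w) / (w - 1)^2 \<ge> 0\<close>.\<close>

lemma ratio_over_w_ln_w_antimono:
  fixes w1 w2 :: real
  assumes "1 < w1" "w1 \<le> w2"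
  shows "(w2 - 1) / (w2 * ln w2) \<le> (w1 - 1) / (w1 * ln w1)"
proof -
  let ?g = "\<lambda>w::real. w * ln w / (w - 1)"
  have "?g w1 \<le> ?g w2"
  proof (rule DERIV_nonneg_imp_increasing_open[OF assms(2)])
    fix x assume x: "w1 < x" "x < w2"
    then have "x > 1" using assms by simp
    then have "DERIV ?g x :> ((ln x + 1) * (x - 1) - x * ln x) / (x - 1)^2"
      by (auto intro!: derivative_eq_intros simp: field_simps power2_eq_square)
    moreover have "((ln x + 1) * (x - 1) - x * ln x) / (x - 1)^2 \<ge> 0"
      using ln_le_minus_one[of x] \<open>x > 1\<close>
      by (intro divide_nonneg_nonneg) (auto simp: algebra_simps)
    ultimately show "\<exists>y. DERIV ?g x :> y \<and> y \<ge> 0" by blast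
  next
    show "continuous_on {w1..w2} ?g" using assms by (intro continuous_intros) auto
  qed
  moreover have "w1 * ln w1 > 0" "w2 * ln w2 > 0" using assms by auto
  ultimately show ?thesis using assms by (simp add: field_simps)
qed

lemma convex_ln_exp_plus_const:
  fixes pc :: real
  assumes "pc > 0"
  shows "convex_on UNIV (\<lambda>z. ln (exp z + pc))"
proof (rule convex_on_realI[where f' = "\<lambda>z. exp z / (exp z + pc)"])
  fix x show "((\<lambda>z. ln (exp z + pc)) has_real_derivative exp x / (exp x + pc)) (at x)"
    using assms by (auto intro!: derivative_eq_intros simp: add_pos_pos)
next
  fix x y :: real assume "x \<le> y"
  then have "exp x * pc \<le> exp y * pc" using assms by simp
  then show "exp x / (exp x + pc) \<le> exp y / (exp y + pc)"
    using assms by (simp add: field_simps add_pos_pos)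
qed auto

lemma convex_neg_ln_efficiency:
  fixes a :: real
  assumes "a > 0"
  shows "convex_on UNIV (\<lambda>z. - ln (1 - exp (- (a * exp z))))"
proof (rule convex_on_realI[where f' = "\<lambda>z. - (a * exp z / (exp (a * exp z) - 1))"])
  fix x
  have pos: "1 - exp (- (a * exp x)) > 0" using assms by simp
  have "((\<lambda>z. - ln (1 - exp (- (a * exp z)))) has_real_derivative
          - ((- (exp (- (a * exp x)) * (- (a * exp x)))) / (1 - exp (- (a * exp x))))) (at x)"
    using pos by (auto intro!: derivative_eq_intros)
  moreover have "exp (a * exp x) > 1" using assms by simp
  ultimately show "((\<lambda>z. - ln (1 - exp (- (a * exp z)))) has_real_derivative
          - (a * exp x / (exp (a * exp x) - 1))) (at x)"
    by (simp add: exp_minus field_simps)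
next
  fix x y :: real assume "x \<le> y"
  then have "a * exp x \<le> a * exp y" using assms by simp
  from ratio_over_exp_minus_one_antimono[OF _ this] assms
  show "- (a * exp x / (exp (a * exp x) - 1)) \<le> - (a * exp y / (exp (a * exp y) - 1))"
    by simp
qed auto

lemma convex_neg_ln_rate:
  fixes c :: real
  assumes "c > 0"
  shows "convex_on UNIV (\<lambda>z. - ln (ln (1 + c * exp z)))"
proof (rule convex_on_realI[where
      f' = "\<lambda>z. - ((1 + c * exp z - 1) / ((1 + c * exp z) * ln (1 + c * exp z)))"])
  fix x
  have "1 + c * exp x > 1" using assms by simp
  then have "((\<lambda>z. - ln (ln (1 + c * exp z))) has_real_derivative
     - ((c * exp x / (1 + c * exp x)) / ln (1 + c * exp x))) (at x)"
    by (auto intro!: derivative_eq_intros simp: field_simps)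
  then show "((\<lambda>z. - ln (ln (1 + c * exp z))) has_real_derivative
     - ((1 + c * exp x - 1) / ((1 + c * exp x) * ln (1 + c * exp x)))) (at x)"
    by (simp add: field_simps)
next
  fix x y :: real assume "x \<le> y"
  then have "1 + c * exp x \<le> 1 + c * exp y" using assms by simp
  from ratio_over_w_ln_w_antimono[OF _ this] assms
  show "- ((1 + c * exp x - 1) / ((1 + c * exp x) * ln (1 + c * exp x)))
     \<le> - ((1 + c * exp y - 1) / ((1 + c * exp y) * ln (1 + c * exp y)))"
    by simp
qed auto

text \<open>The utility of user k, with SINR \<open>a x\<close>, up to the positive factor \<open>L w / (M ln 2)\<close>.\<close>

definition energy_efficiency :: "real \<Rightarrow> real \<Rightarrow> nat \<Rightarrow> real \<Rightarrow> real \<Rightarrow> real" where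
  "energy_efficiency a c M pc x = ln (1 + c * x) * (1 - exp (- (a * x))) ^ M / (x + pc)"

lemma energy_efficiency_log_coordinates:
  fixes a c pc :: real and M :: nat
  assumes "a > 0" "c > 0" "pc > 0"
  defines "G \<equiv> \<lambda>z. - ln (ln (1 + c * exp z)) + real M * (- ln (1 - exp (- (a * exp z))))
                    + ln (exp z + pc)"
  shows "convex_on UNIV G"
    and "\<And>x. x > 0 \<Longrightarrow> energy_efficiency a c M pc x = exp (- G (ln x))"
proof -
  show "convex_on UNIV G"
    unfolding G_def
    by (intro convex_on_add convex_on_cmul convex_neg_ln_rate convex_neg_ln_efficiency
              convex_ln_exp_plus_const assms) auto
next
  fix x :: real assume x: "x > 0"
  have rate: "ln (1 + c * x) > 0" using assms x by (simp add: add_pos_pos)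
  have eff: "1 - exp (- (a * x)) > 0" using assms x by simp
  have "exp (- G (ln x))
      = exp (ln (ln (1 + c * x)) + ln ((1 - exp (- (a * x))) ^ M) - ln (x + pc))"
    using x eff by (simp add: G_def ln_realpow)
  also have "\<dots> = energy_efficiency a c M pc x"
    using rate eff x assms by (simp add: exp_add exp_diff energy_efficiency_def)
  finally show "energy_efficiency a c M pc x = exp (- G (ln x))" ..
qed

text \<open>Quasiconcavity on \<open>[0, \<infinity>)\<close>, stated for a point between two others.  For positive
  endpoints it is convexity of \<open>G\<close> on the log-interval; \<open>E 0 = 0\<close> is the minimum otherwise.\<close>

lemma energy_efficiency_between:
  fixes a c pc x1 x2 x :: real
  assumes "a > 0" "c > 0" "pc > 0"
    and "0 \<le> x1" "x1 \<le> x" "x \<le> x2"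
  shows "min (energy_efficiency a c M pc x1) (energy_efficiency a c M pc x2)
           \<le> energy_efficiency a c M pc x"
proof (cases "x1 = 0")
  case True
  have "energy_efficiency a c M pc x \<ge> 0"
    unfolding energy_efficiency_def using assms
    by (intro divide_nonneg_pos mult_nonneg_nonneg zero_le_power) auto
  then show ?thesis using True by (simp add: energy_efficiency_def min_le_iff_disj)
next
  case False
  then have pos: "0 < x1" "0 < x" "0 < x2" using assms by auto
  obtain G where G: "convex_on UNIV G"
    "\<And>y. y > 0 \<Longrightarrow> energy_efficiency a c M pc y = exp (- G (ln y))"
    using energy_efficiency_log_coordinates[OF assms(1-3)] by blast
  have "ln x \<in> {ln x1..ln x2}" using pos assms by simp
  then have "G (ln x) \<le> max (G (ln x1)) (G (ln x2))"
    using convex_on_le_max convex_on_subset[OF G(1)] by blast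
  then show ?thesis using pos by (auto simp: G(2) max_def min_def)
qed

lemma energy_efficiency_quasiconcave:
  fixes a c pc x1 x2 t :: real
  assumes "a > 0" "c > 0" "pc > 0" "0 \<le> x1" "0 \<le> x2" "0 \<le> t" "t \<le> 1"
  shows "min (energy_efficiency a c M pc x1) (energy_efficiency a c M pc x2)
           \<le> energy_efficiency a c M pc (t * x1 + (1 - t) * x2)"
proof -
  have between: "min x1 x2 \<le> t * x1 + (1 - t) * x2" "t * x1 + (1 - t) * x2 \<le> max x1 x2"
    using convex_bound_le[of x1 "max x1 x2" x2 t "1 - t"]
          convex_bound_le[of "- x1" "- min x1 x2" "- x2" t "1 - t"] assms
    by auto
  show ?thesis
  proof (cases "x1 \<le> x2")
    case True
    then show ?thesis using energy_efficiency_between[OF assms(1-4)] between by simp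
  next
    case False
    then show ?thesis
      using energy_efficiency_between[OF assms(1-3,5)] between by (simp add: min.commute)
  qed
qed

lemma interf_noise_update_own:
  "interf_noise K (p(k := x)) h s d \<sigma>2 k = interf_noise K p h s d \<sigma>2 k"
  unfolding interf_noise_def by (intro arg_cong2[where f="(+)"] sum.cong) auto

text \<open>It is positive: interference is nonnegative and the filtered noise
  \<open>\<sigma>\<^sub>k\<^sup>2 |d\<^sub>k|\<^sup>2\<close> is positive, as \<open>d\<^sub>k \<bullet> s\<^sub>k = 1\<close> forces \<open>d\<^sub>k \<noteq> 0\<close>.\<close>

lemma interf_noise_pos:
  assumes "d k \<bullet> s k = 1" "\<sigma>2 k > 0" "\<And>j. j < K \<Longrightarrow> j \<noteq> k \<Longrightarrow> p j \<ge> 0"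
  shows "interf_noise K p h s d \<sigma>2 k > 0"
proof -
  have "d k \<noteq> 0" using assms(1) by auto
  then have "\<sigma>2 k * (d k \<bullet> d k) > 0" using assms(2) by simp
  moreover have "(\<Sum>j\<in>{..<K} - {k}. p j * (cmod (h j))\<^sup>2 * (d k \<bullet> s j)\<^sup>2) \<ge> 0"
    using assms(3) by (intro sum_nonneg) auto
  ultimately show ?thesis unfolding interf_noise_def by linarith
qed

lemma utility_eq_energy_efficiency:
  assumes a: "a = (cmod (h k))\<^sup>2 / interf_noise K p h s d \<sigma>2 k"
  shows "utility K (p(k := x)) h s d \<sigma>2 w M L pc ber k
           = real L / real M * w / ln 2 * energy_efficiency a (gap ber * a) M pc x"
proof -
  have "sinr K (p(k := x)) h s d \<sigma>2 k = a * x"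
    unfolding sinr_def interf_noise_update_own a by simp
  then show ?thesis
    unfolding utility_def Let_def energy_efficiency_def log_def by (simp add: field_simps)
qed

lemma gap_pos:
  assumes "0 < ber" "ber < 1/5"
  shows "gap ber > 0"
proof -
  have "ln (5 * ber) < 0" using assms by simp
  then show ?thesis unfolding gap_def by (simp add: divide_neg_neg)
qed

theorem lemma1:
  fixes K k M L :: nat
    and p :: "nat \<Rightarrow> real" and h :: "nat \<Rightarrow> complex"
    and s d :: "nat \<Rightarrow> real ^ 'n" and \<sigma>2 :: "nat \<Rightarrow> real"
    and w pc Pmax ber :: real
  assumes "k < K"
    and "\<And>j. j < K \<Longrightarrow> h j \<noteq> 0"
    and "\<And>j. j < K \<Longrightarrow> norm (s j) = 1"
    and "\<And>j. j < K \<Longrightarrow> d j \<bullet> s j = 1"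
    and "\<And>j. j < K \<Longrightarrow> \<sigma>2 j > 0"
    and "\<And>j. j < K \<Longrightarrow> j \<noteq> k \<Longrightarrow> p j \<ge> 0"
    and "w > 0" and "M \<ge> 1" and "L \<le> M" and "pc > 0" and "Pmax > 0"
    and "0 < ber" and "ber < 1/5"
  shows "\<forall>x1\<in>{0..Pmax}. \<forall>x2\<in>{0..Pmax}. \<forall>t\<in>{0<..<1::real}. x1 \<noteq> x2 \<longrightarrow>
           utility K (p(k := t * x1 + (1 - t) * x2)) h s d \<sigma>2 w M L pc ber k
           \<ge> min (utility K (p(k := x1)) h s d \<sigma>2 w M L pc ber k)
                  (utility K (p(k := x2)) h s d \<sigma>2 w M L pc ber k)"
proof (intro ballI impI)
  fix x1 x2 t :: real
  assume "x1 \<in> {0..Pmax}" "x2 \<in> {0..Pmax}" "t \<in> {0<..<1}"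
  define a where "a = (cmod (h k))\<^sup>2 / interf_noise K p h s d \<sigma>2 k"
  define E where "E = energy_efficiency a (gap ber * a) M pc"
  define C where "C = real L / real M * w / ln 2"
  have "a > 0"
    using interf_noise_pos[of d k s \<sigma>2 K p h] assms(1,2,4-6) by (simp add: a_def)
  then have "min (E x1) (E x2) \<le> E (t * x1 + (1 - t) * x2)"
    using energy_efficiency_quasiconcave gap_pos[OF assms(12,13)] assms(10)
      \<open>x1 \<in> {0..Pmax}\<close> \<open>x2 \<in> {0..Pmax}\<close> \<open>t \<in> {0<..<1}\<close> by (simp add: E_def)
  moreover have "C \<ge> 0" using assms(7) by (simp add: C_def)
  ultimately have "min (C * E x1) (C * E x2) \<le> C * E (t * x1 + (1 - t) * x2)"
    by (metis min_mult_distrib_left mult_left_mono)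
  then show "utility K (p(k := t * x1 + (1 - t) * x2)) h s d \<sigma>2 w M L pc ber k
           \<ge> min (utility K (p(k := x1)) h s d \<sigma>2 w M L pc ber k)
                  (utility K (p(k := x2)) h s d \<sigma>2 w M L pc ber k)"
    unfolding utility_eq_energy_efficiency[OF a_def] E_def C_def .
qed

end
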